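(* The wall $W$ is bipartite and $3$-monotone: with $A:=\{(x,y)\in\mathbb{Z}^2: x+y\text{ even}\}$ and $B:=\{(x,y)\in\mathbb{Z}^2: x+y \text{ odd}\}$ as colour classes, each linearly ordered by $\preceq$, the edge set of $W$ is the union of three monotone matchings.
   Context: The wall is the infinite graph $W$ with vertex set $\mathbb{Z}^2$ and edge set $\{(x,y)(x+1,y): x,y\in\mathbb{Z}\}\cup\{(x,y)(x,y+1): x,y\in\mathbb{Z},\ x+y\text{ even}\}$; it is $3$-regular and planar. Define the linear order $\preceq$ on $\mathbb{Z}^2$ by $(x,y)\preceq(x',y')$ if $x+y<x'+y'$, or $x+y=x'+y'$ and $x\leq x'$. For a bipartite graph with linearly ordered colour classes $A$ and $B$, edges $ab$ and $a'b'$ ($a,a'\in A$, $b,b'\in B$) cross if $a\prec a'$ and $b'\prec b$; a matching is monotone if no two of its edges cross; the graph is $d$-monotone if its edge set is the union of $d$ monotone matchings. *)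

theory Defs
  imports Main
begin

type_synonym vert = "int \<times> int"

definition wall_adj :: "vert \<Rightarrow> vert \<Rightarrow> bool" where
  "wall_adj u v \<longleftrightarrow>
     (\<exists>x y. ({u, v} = {(x, y), (x + 1, y)}) \<or>
            ({u, v} = {(x, y), (x, y + 1)} \<and> even (x + y)))"

definition wall_edges :: "vert set set" where
  "wall_edges = {{u, v} | u v. wall_adj u v}"

definition colA :: "vert set" where "colA = {(x, y). even (x + y)}"
definition colB :: "vert set" where "colB = {(x, y). odd (x + y)}"

definition wle :: "vert \<Rightarrow> vert \<Rightarrow> bool" where
  "wle p q \<longleftrightarrow> fst p + snd p < fst q + snd q \<or>
               (fst p + snd p = fst q + snd q \<and> fst p \<le> fst q)"

definition wlt :: "vert \<Rightarrow> vert \<Rightarrow> bool" where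
  "wlt p q \<longleftrightarrow> wle p q \<and> p \<noteq> q"

text \<open>A matching in the bipartite graph, edges written as pairs (a,b) with a in A, b in B.\<close>
definition is_matching :: "(vert \<times> vert) set \<Rightarrow> bool" where
  "is_matching M \<longleftrightarrow>
     (\<forall>(a, b) \<in> M. \<forall>(a', b') \<in> M. (a = a' \<longleftrightarrow> b = b'))"

definition crosses :: "vert \<times> vert \<Rightarrow> vert \<times> vert \<Rightarrow> bool" where
  "crosses e f \<longleftrightarrow> wlt (fst e) (fst f) \<and> wlt (snd f) (snd e)"

definition monotone_matching :: "(vert \<times> vert) set \<Rightarrow> bool" where
  "monotone_matching M \<longleftrightarrow> is_matching M \<and> (\<forall>e \<in> M. \<forall>f \<in> M. \<not> crosses e f)"

definition wall_AB_edges :: "(vert \<times> vert) set" where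
  "wall_AB_edges = {(a, b). a \<in> colA \<and> b \<in> colB \<and> {a, b} \<in> wall_edges}"

end

theory Submission
  imports Defs
begin

text \<open>Every vertex (x, y) of A has exactly three neighbours: (x + 1, y), (x - 1, y) and
(x, y + 1). Hence the A-B edges are the union of the three translations of A by (1, 0), (-1, 0)
and (0, 1), and each of them is a monotone matching because a translation preserves \<open>\<preceq>\<close>.\<close>

definition shift_matching :: "vert set \<Rightarrow> int \<Rightarrow> int \<Rightarrow> (vert \<times> vert) set" where
  "shift_matching S dx dy = {((x, y), (x + dx, y + dy)) | x y. (x, y) \<in> S}"

lemma wle_shift_iff: "wle (x + dx, y + dy) (x' + dx, y' + dy) \<longleftrightarrow> wle (x, y) (x', y')"
  unfolding wle_def by auto

lemma wlt_shift_iff: "wlt (x + dx, y + dy) (x' + dx, y' + dy) \<longleftrightarrow> wlt (x, y) (x', y')"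
  unfolding wlt_def wle_shift_iff by auto

lemma wlt_asym: "wlt p q \<Longrightarrow> \<not> wlt q p"
  unfolding wlt_def wle_def by (auto simp: prod_eq_iff)

lemma monotone_matching_shift_matching: "monotone_matching (shift_matching S dx dy)"
  unfolding monotone_matching_def is_matching_def crosses_def shift_matching_def
  by (auto simp: wlt_shift_iff dest: wlt_asym)

lemma wall_adj_sym: "wall_adj u v \<longleftrightarrow> wall_adj v u"
  unfolding wall_adj_def by (simp only: insert_commute[of u v])

lemma doubleton_in_wall_edges_iff: "{u, v} \<in> wall_edges \<longleftrightarrow> wall_adj u v"
proof
  assume "{u, v} \<in> wall_edges"
  then obtain u' v' where "{u, v} = {u', v'}" "wall_adj u' v'"
    unfolding wall_edges_def by blast
  then show "wall_adj u v"
    unfolding doubleton_eq_iff using wall_adj_sym by metis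
qed (unfold wall_edges_def, blast)

lemma wall_adj_right: "wall_adj (x, y) (x + 1, y)"
  unfolding wall_adj_def by blast

lemma wall_adj_left: "wall_adj (x, y) (x - 1, y)"
  unfolding wall_adj_def by (intro exI[of _ "x - 1"] exI[of _ y] disjI1) auto

lemma wall_adj_up: "even (x + y) \<Longrightarrow> wall_adj (x, y) (x, y + 1)"
  unfolding wall_adj_def by blast

lemma wall_adj_down: "odd (x + y) \<Longrightarrow> wall_adj (x, y) (x, y - 1)"
  unfolding wall_adj_def by (intro exI[of _ x] exI[of _ "y - 1"] disjI2) auto

lemma wall_adj_iff:
  "wall_adj (x, y) v \<longleftrightarrow>
     v = (x + 1, y) \<or> v = (x - 1, y) \<or> (even (x + y) \<and> v = (x, y + 1)) \<or> (odd (x + y) \<and> v = (x, y - 1))"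
    (is "_ \<longleftrightarrow> ?neighbour")
proof
  assume "wall_adj (x, y) v"
  then obtain a b where
    "{(x, y), v} = {(a, b), (a + 1, b)} \<or> ({(x, y), v} = {(a, b), (a, b + 1)} \<and> even (a + b))"
    unfolding wall_adj_def by blast
  then consider "(x, y) = (a, b)" "v = (a + 1, b)" | "(x, y) = (a + 1, b)" "v = (a, b)"
    | "(x, y) = (a, b)" "v = (a, b + 1)" "even (a + b)"
    | "(x, y) = (a, b + 1)" "v = (a, b)" "even (a + b)"
    unfolding doubleton_eq_iff by blast
  then show ?neighbour
  proof cases
    case 4
    then have "odd (x + y)" by simp
    with 4 show ?thesis by simp
  qed simp_all
next
  assume ?neighbour
  then show "wall_adj (x, y) v"
    using wall_adj_right wall_adj_left wall_adj_up wall_adj_down by blast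
qed

lemma wall_adj_colA_iff:
  assumes "(x, y) \<in> colA"
  shows "wall_adj (x, y) v \<longleftrightarrow> v = (x + 1, y) \<or> v = (x - 1, y) \<or> v = (x, y + 1)"
  using assms by (simp add: wall_adj_iff colA_def)

lemma wall_adj_colA_iff_colB:
  assumes "wall_adj u v"
  shows "u \<in> colA \<longleftrightarrow> v \<in> colB"
proof -
  obtain x y where u: "u = (x, y)" by (cases u)
  from assms consider "v = (x + 1, y)" | "v = (x - 1, y)"
    | "even (x + y)" "v = (x, y + 1)" | "odd (x + y)" "v = (x, y - 1)"
    unfolding u wall_adj_iff by blast
  then show ?thesis
    by cases (simp_all add: u colA_def colB_def)
qed

lemma wall_edge_bipartite:
  assumes "e \<in> wall_edges"
  shows "\<exists>a b. e = {a, b} \<and> a \<in> colA \<and> b \<in> colB"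
proof -
  obtain u v where e: "e = {u, v}" and adj: "wall_adj u v"
    using assms unfolding wall_edges_def by blast
  consider "u \<in> colA" | "u \<in> colB"
    by (cases u) (auto simp: colA_def colB_def)
  then show ?thesis
  proof cases
    case 1
    then have "v \<in> colB" using wall_adj_colA_iff_colB[OF adj] by blast
    with 1 e show ?thesis by blast
  next
    case 2
    moreover have "wall_adj v u" using adj wall_adj_sym by blast
    ultimately have "v \<in> colA" using wall_adj_colA_iff_colB by blast
    moreover have "e = {v, u}" using e by (simp only: insert_commute)
    ultimately show ?thesis using 2 by blast
  qed
qed

lemma wall_AB_edges_eq:
  "wall_AB_edges = shift_matching colA 1 0 \<union> shift_matching colA (-1) 0 \<union> shift_matching colA 0 1"
    (is "_ = ?shifts")
proof (rule set_eqI)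
  fix p :: "vert \<times> vert"
  obtain x y v where p: "p = ((x, y), v)" by (metis prod.exhaust)
  have "p \<in> wall_AB_edges \<longleftrightarrow> (x, y) \<in> colA \<and> wall_adj (x, y) v"
    unfolding p wall_AB_edges_def doubleton_in_wall_edges_iff
    using wall_adj_colA_iff_colB[of "(x, y)" v] by blast
  also have "\<dots> \<longleftrightarrow> (x, y) \<in> colA \<and> (v = (x + 1, y) \<or> v = (x - 1, y) \<or> v = (x, y + 1))"
    using wall_adj_colA_iff by blast
  also have "\<dots> \<longleftrightarrow> p \<in> ?shifts"
    unfolding p shift_matching_def by auto
  finally show "p \<in> wall_AB_edges \<longleftrightarrow> p \<in> ?shifts" .
qed

theorem lemma11:
  shows "(\<forall>e \<in> wall_edges. \<exists>a b. e = {a, b} \<and> a \<in> colA \<and> b \<in> colB)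
       \<and> (\<exists>M1 M2 M3. monotone_matching M1 \<and> monotone_matching M2 \<and> monotone_matching M3
            \<and> M1 \<union> M2 \<union> M3 = wall_AB_edges)"
proof (intro conjI)
  show "\<forall>e \<in> wall_edges. \<exists>a b. e = {a, b} \<and> a \<in> colA \<and> b \<in> colB"
    using wall_edge_bipartite by blast
  show "\<exists>M1 M2 M3. monotone_matching M1 \<and> monotone_matching M2 \<and> monotone_matching M3
            \<and> M1 \<union> M2 \<union> M3 = wall_AB_edges"
    by (intro exI[of _ "shift_matching colA 1 0"] exI[of _ "shift_matching colA (-1) 0"]
        exI[of _ "shift_matching colA 0 1"])
      (simp add: monotone_matching_shift_matching wall_AB_edges_eq)
qed

end
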